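(* Let $R$ be a P$v$MD and $J\subseteq I$ nonzero ideals of $R$. The following are equivalent: (1) $J$ is a $t$-reduction of $I$, i.e. $(JI^n)_t=(I^{n+1})_t$ for some $n\ge1$; (2) $(JR_M)(IR_M)=(IR_M)^2$ for every maximal $t$-ideal $M$ of $R$; (3) $(JI)_t=(I^2)_t$.
   Context: For a domain $R$ with quotient field $K$ and nonzero fractional ideal $I$: $I^{-1}=(R:I)=\{x\in K:xI\subseteq R\}$, $I_v=(I^{-1})^{-1}$, $I_t=\bigcup J_v$ over finitely generated subideals $J\subseteq I$; a maximal $t$-ideal is an ideal maximal among proper integral ideals $P$ with $P_t=P$. $R$ is a P$v$MD (Prüfer $v$-multiplication domain) if every nonzero finitely generated ideal $I$ satisfies $(II^{-1})_t=R$ (equivalently, $R_M$ is a valuation domain for each maximal $t$-ideal $M$). *)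

theory Defs
  imports Main "HOL-Computational_Algebra.Fraction_Field"
begin

text \<open>The domain R is the type 'a :: idom, embedded in its quotient field K = 'a fract.
  All (fractional) ideals are represented as subsets of K.\<close>

definition Rset :: "'a::idom fract set" where
  "Rset = range (\<lambda>a. Fract a 1)"

definition span_over :: "'a::idom fract set \<Rightarrow> 'a fract set \<Rightarrow> 'a fract set" where
  "span_over S X = {(\<Sum>x\<in>F. c x * x) | F c. finite F \<and> F \<subseteq> X \<and> (\<forall>x\<in>F. c x \<in> S)}"

definition ideal_prod :: "'a::idom fract set \<Rightarrow> 'a fract set \<Rightarrow> 'a fract set \<Rightarrow> 'a fract set" where
  "ideal_prod S A B = span_over S {a * b | a b. a \<in> A \<and> b \<in> B}"

primrec ideal_pow :: "'a::idom fract set \<Rightarrow> 'a fract set \<Rightarrow> nat \<Rightarrow> 'a fract set" where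
  "ideal_pow S A 0 = S"
| "ideal_pow S A (Suc n) = ideal_prod S A (ideal_pow S A n)"

definition is_ideal :: "'a::idom fract set \<Rightarrow> bool" where
  "is_ideal I \<longleftrightarrow> I \<subseteq> Rset \<and> 0 \<in> I \<and> (\<forall>x\<in>I. \<forall>y\<in>I. x + y \<in> I)
     \<and> (\<forall>r\<in>Rset. \<forall>x\<in>I. r * x \<in> I)"

definition fin_gen :: "'a::idom fract set \<Rightarrow> bool" where
  "fin_gen I \<longleftrightarrow> (\<exists>F. finite F \<and> I = span_over Rset F)"

definition ideal_inv :: "'a::idom fract set \<Rightarrow> 'a fract set" where
  "ideal_inv I = {x. \<forall>y\<in>I. x * y \<in> Rset}"

definition v_op :: "'a::idom fract set \<Rightarrow> 'a fract set" where
  "v_op I = ideal_inv (ideal_inv I)"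

definition t_op :: "'a::idom fract set \<Rightarrow> 'a fract set" where
  "t_op I = \<Union>{v_op J | J. J \<subseteq> I \<and> fin_gen J}"

definition max_t_ideal :: "'a::idom fract set \<Rightarrow> bool" where
  "max_t_ideal M \<longleftrightarrow> is_ideal M \<and> M \<noteq> Rset \<and> t_op M = M \<and>
     (\<forall>N. is_ideal N \<and> N \<noteq> Rset \<and> t_op N = N \<and> M \<subseteq> N \<longrightarrow> N = M)"

definition PvMD :: "'a::idom itself \<Rightarrow> bool" where
  "PvMD _ \<longleftrightarrow> (\<forall>I::'a fract set. is_ideal I \<and> I \<noteq> {0} \<and> fin_gen I \<longrightarrow>
      t_op (ideal_prod Rset I (ideal_inv I)) = Rset)"

definition loc :: "'a::idom fract set \<Rightarrow> 'a fract set" where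
  "loc M = {a / s | a s. a \<in> Rset \<and> s \<in> Rset \<and> s \<notin> M}"

definition ext_loc :: "'a::idom fract set \<Rightarrow> 'a fract set \<Rightarrow> 'a fract set" where
  "ext_loc M I = span_over (loc M) I"

end

theory Submission
  imports Defs
begin

text \<open>
  In a PvMD the localization \<open>R\<^sub>M\<close> at a maximal t-ideal \<open>M\<close> is a valuation domain, and
  t-closure is computed locally: \<open>x \<in> A\<^sub>t\<close> iff \<open>x \<in> A R\<^sub>M\<close> for every maximal t-ideal \<open>M\<close>.
  Hence (2) and (3) both say \<open>I\<^sup>2 \<subseteq> JI R\<^sub>M\<close> for all \<open>M\<close>, and (1) reduces to a fact about
  valuation domains: \<open>I\<^sup>n\<^sup>+\<^sup>1 \<subseteq> JI\<^sup>n\<close> forces \<open>I\<^sup>2 \<subseteq> JI\<close>. If \<open>c \<in> I\<close> had \<open>c\<^sup>2 \<notin> JI\<close>, then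
  \<open>v(je) > 2 v(c)\<close> for all \<open>j \<in> J\<close>, \<open>e \<in> I\<close>; applying the reduction \<open>n+1\<close> times to
  \<open>c\<^sup>2\<^sup>n\<^sup>+\<^sup>1\<close> yields valuation inequalities that cannot hold simultaneously.
\<close>

lemma Rset_zero [simp]: "0 \<in> Rset"
  unfolding Rset_def by (metis Zero_fract_def rangeI)

lemma Rset_one [simp]: "1 \<in> Rset"
  unfolding Rset_def by (metis One_fract_def rangeI)

lemma Rset_add: "x \<in> Rset \<Longrightarrow> y \<in> Rset \<Longrightarrow> x + y \<in> Rset"
  unfolding Rset_def by auto

lemma Rset_mult: "x \<in> Rset \<Longrightarrow> y \<in> Rset \<Longrightarrow> x * y \<in> Rset"
  unfolding Rset_def by auto

lemma Rset_power: "x \<in> Rset \<Longrightarrow> x ^ n \<in> Rset"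
  by (induction n) (auto simp: Rset_mult)

definition is_submodule :: "'a::idom fract set \<Rightarrow> 'a fract set \<Rightarrow> bool" where
  "is_submodule S Z \<longleftrightarrow> 0 \<in> Z \<and> (\<forall>x\<in>Z. \<forall>y\<in>Z. x + y \<in> Z) \<and> (\<forall>s\<in>S. \<forall>z\<in>Z. s * z \<in> Z)"

lemma is_submoduleD:
  assumes "is_submodule S Z"
  shows submodule_zero: "0 \<in> Z"
    and submodule_add: "x \<in> Z \<Longrightarrow> y \<in> Z \<Longrightarrow> x + y \<in> Z"
    and submodule_scale: "s \<in> S \<Longrightarrow> x \<in> Z \<Longrightarrow> s * x \<in> Z"
  using assms unfolding is_submodule_def by auto

lemma is_ideal_iff_submodule: "is_ideal A \<longleftrightarrow> is_submodule Rset A \<and> A \<subseteq> Rset"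
  unfolding is_ideal_def is_submodule_def by blast

lemma is_submodule_Rset: "is_submodule Rset Rset"
  unfolding is_submodule_def by (auto simp: Rset_add Rset_mult)

lemma is_submodule_preimage_mult:
  "is_submodule S Y \<Longrightarrow> is_submodule S {w. c * w \<in> Y}"
  unfolding is_submodule_def by (simp add: distrib_left mult.left_commute)

lemma span_over_least: "is_submodule S Z \<Longrightarrow> X \<subseteq> Z \<Longrightarrow> span_over S X \<subseteq> Z"
proof
  fix y assume Z: "is_submodule S Z" and X: "X \<subseteq> Z" and "y \<in> span_over S X"
  then obtain F c where y: "y = (\<Sum>x\<in>F. c x * x)" "finite F" "F \<subseteq> X" "\<forall>x\<in>F. c x \<in> S"
    unfolding span_over_def by blast
  from y(2-4) show "y \<in> Z"
    unfolding y(1)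
    by (induction F rule: finite_induct)
       (use X in \<open>auto intro: submodule_zero[OF Z] submodule_add[OF Z] submodule_scale[OF Z]\<close>)
qed

lemma span_over_superset: "1 \<in> S \<Longrightarrow> X \<subseteq> span_over S X"
proof
  fix x assume "1 \<in> S" "x \<in> X"
  then show "x \<in> span_over S X"
    unfolding span_over_def by (intro CollectI exI[of _ "{x}"] exI[of _ "\<lambda>_. 1"]) auto
qed

lemma span_over_mono: "X \<subseteq> Y \<Longrightarrow> span_over S X \<subseteq> span_over S Y"
  unfolding span_over_def by blast

lemma span_over_mono_scalars: "S \<subseteq> S' \<Longrightarrow> span_over S X \<subseteq> span_over S' X"
  unfolding span_over_def by blast

lemma is_submodule_span_over:
  assumes "0 \<in> S" and "\<And>a b. a \<in> S \<Longrightarrow> b \<in> S \<Longrightarrow> a + b \<in> S"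
    and "\<And>a b. a \<in> S \<Longrightarrow> b \<in> S \<Longrightarrow> a * b \<in> S"
  shows "is_submodule S (span_over S X)"
  unfolding is_submodule_def
proof (intro conjI ballI)
  show "0 \<in> span_over S X"
    unfolding span_over_def by (intro CollectI exI[of _ "{}"]) auto
next
  fix x y assume "x \<in> span_over S X" "y \<in> span_over S X"
  then obtain F c G d where x: "x = (\<Sum>z\<in>F. c z * z)" "finite F" "F \<subseteq> X" "\<forall>z\<in>F. c z \<in> S"
    and y: "y = (\<Sum>z\<in>G. d z * z)" "finite G" "G \<subseteq> X" "\<forall>z\<in>G. d z \<in> S"
    unfolding span_over_def by blast
  define c' where "c' z = (if z \<in> F then c z else 0)" for z
  define d' where "d' z = (if z \<in> G then d z else 0)" for z
  have "x = (\<Sum>z\<in>F \<union> G. c' z * z)"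
    unfolding x c'_def using x(2) y(2) by (subst sum.mono_neutral_right[of "F \<union> G" F]) auto
  moreover have "y = (\<Sum>z\<in>F \<union> G. d' z * z)"
    unfolding y d'_def using x(2) y(2) by (subst sum.mono_neutral_right[of "F \<union> G" G]) auto
  ultimately
  have "x + y = (\<Sum>z\<in>F \<union> G. (c' z + d' z) * z)"
    by (simp add: sum.distrib distrib_right)
  moreover have "\<forall>z\<in>F \<union> G. c' z + d' z \<in> S"
    using x(4) y(4) assms(1,2) by (auto simp: c'_def d'_def)
  ultimately show "x + y \<in> span_over S X"
    unfolding span_over_def using x(2,3) y(2,3)
    by (intro CollectI exI[of _ "F \<union> G"] exI[of _ "\<lambda>z. c' z + d' z"]) auto
next
  fix s x assume s: "s \<in> S" and "x \<in> span_over S X"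
  then obtain F c where x: "x = (\<Sum>z\<in>F. c z * z)" "finite F" "F \<subseteq> X" "\<forall>z\<in>F. c z \<in> S"
    unfolding span_over_def by blast
  have "s * x = (\<Sum>z\<in>F. (s * c z) * z)"
    unfolding x by (simp add: sum_distrib_left mult.assoc)
  moreover have "\<forall>z\<in>F. s * c z \<in> S"
    using x(4) s assms(3) by auto
  ultimately show "s * x \<in> span_over S X"
    unfolding span_over_def using x(2,3) by (intro CollectI exI[of _ F] exI[of _ "\<lambda>z. s * c z"]) auto
qed

abbreviation R_span :: "'a::idom fract set \<Rightarrow> 'a fract set" where
  "R_span X \<equiv> span_over Rset X"

lemma is_submodule_R_span: "is_submodule Rset (R_span X)"
  by (rule is_submodule_span_over) (auto simp: Rset_add Rset_mult)

lemma R_span_subset_Rset: "X \<subseteq> Rset \<Longrightarrow> R_span X \<subseteq> Rset"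
  by (rule span_over_least[OF is_submodule_Rset])

lemma is_ideal_R_span: "X \<subseteq> Rset \<Longrightarrow> is_ideal (R_span X)"
  unfolding is_ideal_iff_submodule using is_submodule_R_span R_span_subset_Rset by blast

lemma fin_gen_R_span: "finite F \<Longrightarrow> fin_gen (R_span F)"
  unfolding fin_gen_def by blast

lemma ideal_prod_mem: "a \<in> A \<Longrightarrow> b \<in> B \<Longrightarrow> a * b \<in> ideal_prod Rset A B"
  unfolding ideal_prod_def using span_over_superset[of Rset "{a * b |a b. a \<in> A \<and> b \<in> B}"] by auto

lemma is_submodule_ideal_prod: "is_submodule Rset (ideal_prod Rset A B)"
  unfolding ideal_prod_def by (rule is_submodule_R_span)

lemma is_submodule_ideal_pow: "is_submodule Rset (ideal_pow Rset A n)"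
  by (cases n) (simp_all add: is_submodule_Rset is_submodule_ideal_prod)

lemma ideal_prod_subset_Rset:
  "A \<subseteq> Rset \<Longrightarrow> B \<subseteq> Rset \<Longrightarrow> ideal_prod Rset A B \<subseteq> Rset"
  unfolding ideal_prod_def by (rule R_span_subset_Rset) (blast intro: Rset_mult)

lemma is_ideal_ideal_prod:
  "is_ideal A \<Longrightarrow> is_ideal B \<Longrightarrow> is_ideal (ideal_prod Rset A B)"
  by (simp add: is_ideal_iff_submodule is_submodule_ideal_prod ideal_prod_subset_Rset)

lemma ideal_prod_mono:
  "A \<subseteq> A' \<Longrightarrow> B \<subseteq> B' \<Longrightarrow> ideal_prod S A B \<subseteq> ideal_prod S A' B'"
  unfolding ideal_prod_def by (rule span_over_mono) blast

lemma ideal_prod_Rset_right: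
  assumes "is_submodule Rset A"
  shows "ideal_prod Rset A Rset = A"
proof
  show "ideal_prod Rset A Rset \<subseteq> A"
    unfolding ideal_prod_def
    by (rule span_over_least[OF assms]) (auto, metis mult.commute submodule_scale[OF assms])
  show "A \<subseteq> ideal_prod Rset A Rset"
    using ideal_prod_mem[of _ A 1 Rset] by auto
qed

lemma ideal_pow_one: "is_submodule Rset A \<Longrightarrow> ideal_pow Rset A 1 = A"
  by (simp add: ideal_prod_Rset_right)

lemma is_ideal_ideal_pow: "is_ideal A \<Longrightarrow> is_ideal (ideal_pow Rset A n)"
  by (induction n)
     (simp_all add: is_ideal_iff_submodule is_submodule_Rset
       is_ideal_ideal_prod[unfolded is_ideal_iff_submodule])

lemma power_mem_ideal_pow: "e \<in> A \<Longrightarrow> e ^ n \<in> ideal_pow Rset A n"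
  by (induction n) (simp_all add: ideal_prod_mem)

lemma ideal_prod_subset_ideal_pow_two:
  assumes "is_submodule Rset I" "J \<subseteq> I"
  shows "ideal_prod Rset J I \<subseteq> ideal_pow Rset I 2"
  using ideal_prod_mono[OF assms(2), of I I] ideal_pow_one[OF assms(1)]
  by (simp add: numeral_2_eq_2)

lemma is_submodule_ideal_inv: "is_submodule Rset (ideal_inv X)"
  unfolding is_submodule_def ideal_inv_def
  by (simp add: distrib_right Rset_add mult.assoc Rset_mult)

lemma ideal_inv_antimono: "X \<subseteq> Y \<Longrightarrow> ideal_inv Y \<subseteq> ideal_inv X"
  unfolding ideal_inv_def by blast

lemma v_op_extensive: "X \<subseteq> v_op X"
  unfolding v_op_def ideal_inv_def by (auto simp: mult.commute)

lemma v_op_mono: "X \<subseteq> Y \<Longrightarrow> v_op X \<subseteq> v_op Y"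
  unfolding v_op_def by (intro ideal_inv_antimono)

lemma v_op_idem: "v_op (v_op X) = v_op X"
  by (metis ideal_inv_antimono subset_antisym v_op_def v_op_extensive)

lemma is_submodule_v_op: "is_submodule Rset (v_op X)"
  unfolding v_op_def by (rule is_submodule_ideal_inv)

lemma v_op_subset_Rset:
  assumes "X \<subseteq> Rset"
  shows "v_op X \<subseteq> Rset"
proof
  fix x assume x: "x \<in> v_op X"
  have "1 \<in> ideal_inv X"
    using assms unfolding ideal_inv_def by auto
  then have "x * 1 \<in> Rset"
    using x unfolding v_op_def ideal_inv_def by blast
  then show "x \<in> Rset" by simp
qed

lemma v_op_R_span_scale:
  assumes "1 \<in> v_op (R_span F)"
  shows "x \<in> v_op (R_span ((*) x ` F))"
  unfolding v_op_def
proof (subst ideal_inv_def, intro CollectI ballI)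
  fix y assume y: "y \<in> ideal_inv (R_span ((*) x ` F))"
  have "F \<subseteq> {w. (x * y) * w \<in> Rset}"
  proof
    fix f assume "f \<in> F"
    then have "x * f \<in> R_span ((*) x ` F)"
      using span_over_superset[of Rset "(*) x ` F"] by auto
    then have "y * (x * f) \<in> Rset"
      using y unfolding ideal_inv_def by blast
    then show "f \<in> {w. (x * y) * w \<in> Rset}"
      by (simp add: ac_simps)
  qed
  then have "R_span F \<subseteq> {w. (x * y) * w \<in> Rset}"
    by (rule span_over_least[OF is_submodule_preimage_mult[OF is_submodule_Rset]])
  then have "x * y \<in> ideal_inv (R_span F)"
    unfolding ideal_inv_def by blast
  then have "1 * (x * y) \<in> Rset"
    using assms unfolding v_op_def ideal_inv_def by blast
  then show "x * y \<in> Rset" by simp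
qed

lemma t_op_iff:
  assumes "is_submodule Rset A"
  shows "x \<in> t_op A \<longleftrightarrow> (\<exists>F. finite F \<and> F \<subseteq> A \<and> x \<in> v_op (R_span F))"
proof
  assume "x \<in> t_op A"
  then obtain F where F: "finite F" "R_span F \<subseteq> A" "x \<in> v_op (R_span F)"
    unfolding t_op_def fin_gen_def by blast
  moreover have "F \<subseteq> R_span F" by (simp add: span_over_superset)
  ultimately show "\<exists>F. finite F \<and> F \<subseteq> A \<and> x \<in> v_op (R_span F)" by blast
next
  assume "\<exists>F. finite F \<and> F \<subseteq> A \<and> x \<in> v_op (R_span F)"
  then show "x \<in> t_op A"
    unfolding t_op_def using span_over_least[OF assms] fin_gen_R_span by blast
qed

lemma t_op_mono: "A \<subseteq> B \<Longrightarrow> t_op A \<subseteq> t_op B"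
  unfolding t_op_def by blast

lemma t_op_extensive:
  assumes "is_submodule Rset A"
  shows "A \<subseteq> t_op A"
proof
  fix x assume "x \<in> A"
  moreover have "x \<in> v_op (R_span {x})"
    using v_op_extensive span_over_superset[of Rset "{x}"] by auto
  ultimately show "x \<in> t_op A"
    unfolding t_op_iff[OF assms] by (intro exI[of _ "{x}"]) auto
qed

lemma is_submodule_t_op:
  assumes A: "is_submodule Rset A"
  shows "is_submodule Rset (t_op A)"
  unfolding is_submodule_def
proof (intro conjI ballI)
  show "0 \<in> t_op A"
    using t_op_extensive[OF A] submodule_zero[OF A] by blast
next
  fix x y assume "x \<in> t_op A" "y \<in> t_op A"
  then obtain F G where F: "finite F" "F \<subseteq> A" "x \<in> v_op (R_span F)"
    and G: "finite G" "G \<subseteq> A" "y \<in> v_op (R_span G)"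
    unfolding t_op_iff[OF A] by blast
  have "x \<in> v_op (R_span (F \<union> G))" "y \<in> v_op (R_span (F \<union> G))"
    using F(3) G(3) v_op_mono[OF span_over_mono] by blast+
  then have "x + y \<in> v_op (R_span (F \<union> G))"
    by (rule submodule_add[OF is_submodule_v_op])
  then show "x + y \<in> t_op A"
    unfolding t_op_iff[OF A] using F G by blast
next
  fix s x :: "'a fract" assume s: "s \<in> Rset" and "x \<in> t_op A"
  then obtain F where "finite F" "F \<subseteq> A" "x \<in> v_op (R_span F)"
    unfolding t_op_iff[OF A] by blast
  with s show "s * x \<in> t_op A"
    unfolding t_op_iff[OF A] using submodule_scale[OF is_submodule_v_op] by blast
qed

lemma t_op_idem:
  assumes A: "is_submodule Rset A"
  shows "t_op (t_op A) = t_op A"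
proof
  show "t_op A \<subseteq> t_op (t_op A)"
    by (rule t_op_extensive[OF is_submodule_t_op[OF A]])
  show "t_op (t_op A) \<subseteq> t_op A"
  proof
    fix x assume "x \<in> t_op (t_op A)"
    then obtain F where F: "finite F" "F \<subseteq> t_op A" "x \<in> v_op (R_span F)"
      unfolding t_op_iff[OF is_submodule_t_op[OF A]] by blast
    then have "\<forall>f\<in>F. \<exists>G. finite G \<and> G \<subseteq> A \<and> f \<in> v_op (R_span G)"
      unfolding t_op_iff[OF A, symmetric] by blast
    then obtain G where G: "\<forall>f\<in>F. finite (G f) \<and> G f \<subseteq> A \<and> f \<in> v_op (R_span (G f))"
      by (rule bchoice[elim_format]) blast
    define H where "H = (\<Union>f\<in>F. G f)"
    have "F \<subseteq> v_op (R_span H)"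
    proof
      fix f assume "f \<in> F"
      then have "G f \<subseteq> H" "f \<in> v_op (R_span (G f))"
        using G unfolding H_def by auto
      then show "f \<in> v_op (R_span H)"
        using v_op_mono[OF span_over_mono] by blast
    qed
    then have "v_op (R_span F) \<subseteq> v_op (v_op (R_span H))"
      by (intro v_op_mono span_over_least[OF is_submodule_v_op])
    then have "v_op (R_span F) \<subseteq> v_op (R_span H)"
      by (simp only: v_op_idem)
    moreover have "finite H" "H \<subseteq> A"
      unfolding H_def using F(1) G by auto
    ultimately show "x \<in> t_op A"
      unfolding t_op_iff[OF A] using F(3) by blast
  qed
qed

lemma t_op_subset_Rset: "A \<subseteq> Rset \<Longrightarrow> t_op A \<subseteq> Rset"
  unfolding t_op_def using v_op_subset_Rset by blast

lemma is_ideal_t_op: "is_ideal A \<Longrightarrow> is_ideal (t_op A)"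
  unfolding is_ideal_iff_submodule using is_submodule_t_op t_op_subset_Rset by blast

lemma t_op_eq_t_op_iff:
  assumes "is_submodule Rset A" "is_submodule Rset B" "A \<subseteq> B"
  shows "t_op A = t_op B \<longleftrightarrow> B \<subseteq> t_op A"
proof
  assume "B \<subseteq> t_op A"
  then have "t_op B \<subseteq> t_op A"
    using t_op_mono t_op_idem[OF assms(1)] by metis
  then show "t_op A = t_op B"
    using t_op_mono[OF assms(3)] by blast
qed (use t_op_extensive[OF assms(2)] in blast)

text \<open>The two
  divisibility relations stand in for the valuation of \<open>R\<^sub>M\<close>, which is never constructed:
  \<open>divides_at M x y\<close> means \<open>v(x) \<le> v(y)\<close> and \<open>strictly_divides_at M x y\<close> means \<open>v(x) < v(y)\<close>.\<close>

definition frac_at :: "'a::idom fract set \<Rightarrow> 'a fract set \<Rightarrow> 'a fract set" where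
  "frac_at M Y = {y / s | y s. y \<in> Y \<and> s \<in> Rset - M}"

definition divides_at :: "'a::idom fract set \<Rightarrow> 'a fract \<Rightarrow> 'a fract \<Rightarrow> bool" where
  "divides_at M x y \<longleftrightarrow> (\<exists>s\<in>Rset - M. \<exists>r\<in>Rset. s * y = r * x)"

definition strictly_divides_at :: "'a::idom fract set \<Rightarrow> 'a fract \<Rightarrow> 'a fract \<Rightarrow> bool" where
  "strictly_divides_at M x y \<longleftrightarrow> (\<exists>s\<in>Rset - M. \<exists>m\<in>M. s * y = m * x)"

lemma loc_eq_frac_at: "loc M = frac_at M Rset"
  unfolding loc_def frac_at_def by blast

locale prime_ideal =
  fixes M :: "'a::idom fract set"
  assumes ideal: "is_ideal M"
    and one_notin: "1 \<notin> M"
    and prime: "a \<in> Rset \<Longrightarrow> b \<in> Rset \<Longrightarrow> a * b \<in> M \<Longrightarrow> a \<in> M \<or> b \<in> M"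
begin

lemma zero_in: "0 \<in> M"
  using ideal unfolding is_ideal_def by blast

lemma mult_in: "r \<in> Rset \<Longrightarrow> m \<in> M \<Longrightarrow> r * m \<in> M"
  using ideal unfolding is_ideal_def by blast

lemma one_in_compl: "1 \<in> Rset - M"
  using one_notin by simp

lemma compl_mult: "s \<in> Rset - M \<Longrightarrow> t \<in> Rset - M \<Longrightarrow> s * t \<in> Rset - M"
  using prime Rset_mult by blast

lemma compl_nonzero: "s \<in> Rset - M \<Longrightarrow> s \<noteq> 0"
  using zero_in by blast

lemma frac_at_iff: "x \<in> frac_at M Y \<longleftrightarrow> (\<exists>s\<in>Rset - M. s * x \<in> Y)"
proof
  assume "x \<in> frac_at M Y"
  then obtain y s where "x = y / s" "y \<in> Y" "s \<in> Rset - M"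
    unfolding frac_at_def by blast
  moreover from this have "s * x = y"
    using compl_nonzero by simp
  ultimately show "\<exists>s\<in>Rset - M. s * x \<in> Y" by metis
next
  assume "\<exists>s\<in>Rset - M. s * x \<in> Y"
  then obtain s where "s \<in> Rset - M" "s * x \<in> Y" by blast
  moreover have "x = (s * x) / s"
    using compl_nonzero[OF \<open>s \<in> Rset - M\<close>] by simp
  ultimately show "x \<in> frac_at M Y"
    unfolding frac_at_def by blast
qed

lemma subset_frac_at: "Y \<subseteq> frac_at M Y"
proof
  fix y assume "y \<in> Y"
  then have "1 * y \<in> Y" by simp
  then show "y \<in> frac_at M Y"
    unfolding frac_at_iff using one_in_compl by blast
qed

lemma is_submodule_frac_at:
  assumes Y: "is_submodule Rset Y"
  shows "is_submodule (loc M) (frac_at M Y)"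
  unfolding is_submodule_def
proof (intro conjI ballI)
  show "0 \<in> frac_at M Y"
    using subset_frac_at submodule_zero[OF Y] by blast
next
  fix x y assume "x \<in> frac_at M Y" "y \<in> frac_at M Y"
  then obtain s t where "s \<in> Rset - M" "s * x \<in> Y" "t \<in> Rset - M" "t * y \<in> Y"
    unfolding frac_at_iff by blast
  moreover have "(s * t) * (x + y) = t * (s * x) + s * (t * y)"
    by (simp add: algebra_simps)
  ultimately show "x + y \<in> frac_at M Y"
    unfolding frac_at_iff using compl_mult submodule_add[OF Y] submodule_scale[OF Y]
    by (metis Diff_iff)
next
  fix c y assume "c \<in> loc M" "y \<in> frac_at M Y"
  then obtain a s t where "c = a / s" "a \<in> Rset" "s \<in> Rset - M" "t \<in> Rset - M" "t * y \<in> Y"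
    unfolding loc_def frac_at_iff by blast
  moreover have "(s * t) * (c * y) = a * (t * y)"
    using \<open>c = a / s\<close> compl_nonzero[OF \<open>s \<in> Rset - M\<close>] by simp
  ultimately show "c * y \<in> frac_at M Y"
    unfolding frac_at_iff using compl_mult submodule_scale[OF Y] by metis
qed

lemma frac_at_least:
  assumes T: "is_submodule (loc M) T" and "Y \<subseteq> T"
  shows "frac_at M Y \<subseteq> T"
proof
  fix x assume "x \<in> frac_at M Y"
  then obtain y s where "x = y / s" "y \<in> Y" "s \<in> Rset - M"
    unfolding frac_at_def by blast
  then have "x = (1 / s) * y" "y \<in> T"
    using assms(2) by auto
  moreover have "1 / s \<in> loc M"
    using \<open>s \<in> Rset - M\<close> unfolding loc_def by fastforce
  ultimately show "x \<in> T"
    using submodule_scale[OF T] by blast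
qed

lemma is_submodule_loc: "is_submodule (loc M) (loc M)"
  using is_submodule_frac_at[OF is_submodule_Rset] by (simp add: loc_eq_frac_at)

lemma is_submodule_span_over_loc: "is_submodule (loc M) (span_over (loc M) X)"
  by (rule is_submodule_span_over)
     (use is_submodule_loc in \<open>auto simp: is_submodule_def\<close>)

lemma frac_at_eq_iff:
  assumes "is_submodule Rset Y" "Y \<subseteq> Z"
  shows "frac_at M Y = frac_at M Z \<longleftrightarrow> Z \<subseteq> frac_at M Y"
proof
  assume "Z \<subseteq> frac_at M Y"
  then have "frac_at M Z \<subseteq> frac_at M Y"
    by (rule frac_at_least[OF is_submodule_frac_at[OF assms(1)]])
  moreover have "frac_at M Y \<subseteq> frac_at M Z"
    using assms(2) unfolding frac_at_def by blast
  ultimately show "frac_at M Y = frac_at M Z" by blast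
qed (use subset_frac_at in blast)

lemma ext_loc_eq_frac_at:
  assumes "is_submodule Rset I"
  shows "ext_loc M I = frac_at M I"
proof
  show "ext_loc M I \<subseteq> frac_at M I"
    unfolding ext_loc_def
    by (rule span_over_least[OF is_submodule_frac_at[OF assms] subset_frac_at])
  have "I \<subseteq> ext_loc M I"
    unfolding ext_loc_def using subset_frac_at[of Rset]
    by (intro span_over_superset) (simp add: loc_eq_frac_at subset_iff)
  then show "frac_at M I \<subseteq> ext_loc M I"
    unfolding ext_loc_def by (rule frac_at_least[OF is_submodule_span_over_loc])
qed

lemma frac_at_ideal_prod:
  assumes A: "is_submodule Rset A" and B: "is_submodule Rset B"
  shows "ideal_prod (loc M) (frac_at M A) (frac_at M B) = frac_at M (ideal_prod Rset A B)"
proof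
  have "{a * b |a b. a \<in> frac_at M A \<and> b \<in> frac_at M B} \<subseteq> frac_at M (ideal_prod Rset A B)"
  proof clarify
    fix a b assume "a \<in> frac_at M A" "b \<in> frac_at M B"
    then obtain s t where "s \<in> Rset - M" "s * a \<in> A" "t \<in> Rset - M" "t * b \<in> B"
      unfolding frac_at_iff by blast
    moreover have "(s * t) * (a * b) = (s * a) * (t * b)"
      by (simp add: ac_simps)
    ultimately show "a * b \<in> frac_at M (ideal_prod Rset A B)"
      unfolding frac_at_iff using compl_mult ideal_prod_mem by metis
  qed
  then show "ideal_prod (loc M) (frac_at M A) (frac_at M B) \<subseteq> frac_at M (ideal_prod Rset A B)"
    unfolding ideal_prod_def[of "loc M"]
    by (rule span_over_least[OF is_submodule_frac_at[OF is_submodule_ideal_prod]])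
  have "Rset \<subseteq> loc M"
    using subset_frac_at by (simp add: loc_eq_frac_at)
  then have "ideal_prod Rset A B \<subseteq> ideal_prod (loc M) A B"
    unfolding ideal_prod_def by (rule span_over_mono_scalars)
  also have "\<dots> \<subseteq> ideal_prod (loc M) (frac_at M A) (frac_at M B)"
    by (intro ideal_prod_mono subset_frac_at)
  finally have "ideal_prod Rset A B \<subseteq> ideal_prod (loc M) (frac_at M A) (frac_at M B)" .
  then show "frac_at M (ideal_prod Rset A B) \<subseteq> ideal_prod (loc M) (frac_at M A) (frac_at M B)"
    by (rule frac_at_least[rotated]) (unfold ideal_prod_def, rule is_submodule_span_over_loc)
qed

lemma frac_at_ideal_pow:
  assumes "is_submodule Rset A"
  shows "ideal_pow (loc M) (frac_at M A) n = frac_at M (ideal_pow Rset A n)"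
proof (induction n)
  case (Suc n)
  then show ?case
    by (simp add: frac_at_ideal_prod assms is_submodule_ideal_pow)
qed (simp add: loc_eq_frac_at)

lemma ext_loc_reduction_iff:
  assumes I: "is_submodule Rset I" and J: "is_submodule Rset J" and "J \<subseteq> I"
  shows "ideal_prod (loc M) (ext_loc M J) (ext_loc M I) = ideal_pow (loc M) (ext_loc M I) 2
    \<longleftrightarrow> ideal_pow Rset I 2 \<subseteq> frac_at M (ideal_prod Rset J I)"
  using frac_at_eq_iff[OF is_submodule_ideal_prod ideal_prod_subset_ideal_pow_two[OF I \<open>J \<subseteq> I\<close>]]
  by (simp add: ext_loc_eq_frac_at I J frac_at_ideal_prod frac_at_ideal_pow)

lemma divides_at_refl: "divides_at M x x"
  unfolding divides_at_def using one_in_compl Rset_one by metis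

lemma divides_at_trans: "divides_at M x y \<Longrightarrow> divides_at M y z \<Longrightarrow> divides_at M x z"
  unfolding divides_at_def
proof (elim bexE)
  fix s r t q assume "s \<in> Rset - M" "r \<in> Rset" "s * y = r * x" "t \<in> Rset - M" "q \<in> Rset" "t * z = q * y"
  moreover from this have "(s * t) * z = (q * r) * x"
    by (metis mult.assoc mult.left_commute)
  ultimately show "\<exists>s\<in>Rset - M. \<exists>r\<in>Rset. s * z = r * x"
    using compl_mult Rset_mult by blast
qed

lemma divides_at_mult:
  "divides_at M x y \<Longrightarrow> divides_at M x' y' \<Longrightarrow> divides_at M (x * x') (y * y')"
  unfolding divides_at_def
proof (elim bexE)
  fix s r t q assume "s \<in> Rset - M" "r \<in> Rset" "s * y = r * x" "t \<in> Rset - M" "q \<in> Rset" "t * y' = q * x'"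
  moreover from this have "(s * t) * (y * y') = (r * q) * (x * x')"
    by (metis mult.assoc mult.left_commute)
  ultimately show "\<exists>s\<in>Rset - M. \<exists>r\<in>Rset. s * (y * y') = r * (x * x')"
    using compl_mult Rset_mult by blast
qed

lemma divides_at_power: "divides_at M x y \<Longrightarrow> divides_at M (x ^ n) (y ^ n)"
  by (induction n) (simp_all add: divides_at_refl divides_at_mult)

lemma divides_at_add:
  "divides_at M x y \<Longrightarrow> divides_at M x z \<Longrightarrow> divides_at M x (y + z)"
  unfolding divides_at_def
proof (elim bexE)
  fix s r t q assume "s \<in> Rset - M" "r \<in> Rset" "s * y = r * x" "t \<in> Rset - M" "q \<in> Rset" "t * z = q * x"
  moreover from this have "(s * t) * (y + z) = (t * r + s * q) * x"
    by (simp add: algebra_simps)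
  ultimately show "\<exists>s\<in>Rset - M. \<exists>r\<in>Rset. s * (y + z) = r * x"
    using compl_mult Rset_mult Rset_add by (metis Diff_iff)
qed

lemma divides_at_scale: "r \<in> Rset \<Longrightarrow> divides_at M x y \<Longrightarrow> divides_at M x (r * y)"
  using divides_at_mult[of 1 r x y] unfolding divides_at_def
  by (metis mult_1 mult.commute one_in_compl)

lemma frac_at_divides_at:
  assumes "is_submodule Rset A" "x \<in> frac_at M A" "divides_at M x y"
  shows "y \<in> frac_at M A"
proof -
  obtain t s r where "t \<in> Rset - M" "t * x \<in> A" "s \<in> Rset - M" "r \<in> Rset" "s * y = r * x"
    using assms(2,3) unfolding frac_at_iff divides_at_def by blast
  moreover from this have "(t * s) * y = r * (t * x)"
    by (metis mult.assoc mult.left_commute)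
  ultimately show ?thesis
    unfolding frac_at_iff using compl_mult submodule_scale[OF assms(1)] by metis
qed

lemma divides_at_cancel_compl:
  "s \<in> Rset - M \<Longrightarrow> divides_at M x (s * y) \<Longrightarrow> divides_at M x y"
  unfolding divides_at_def using compl_mult by (metis mult.assoc)

lemma strictly_divides_at_imp_divides_at: "strictly_divides_at M x y \<Longrightarrow> divides_at M x y"
  using ideal unfolding strictly_divides_at_def divides_at_def is_ideal_def by blast

lemma divides_at_mult_strictly:
  "divides_at M x y \<Longrightarrow> strictly_divides_at M x' y' \<Longrightarrow> strictly_divides_at M (x * x') (y * y')"
  unfolding divides_at_def strictly_divides_at_def
proof (elim bexE)
  fix s r t m assume "s \<in> Rset - M" "r \<in> Rset" "s * y = r * x" "t \<in> Rset - M" "m \<in> M" "t * y' = m * x'"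
  moreover from this have "(s * t) * (y * y') = (r * m) * (x * x')"
    by (metis mult.assoc mult.left_commute)
  ultimately show "\<exists>s\<in>Rset - M. \<exists>m\<in>M. s * (y * y') = m * (x * x')"
    using compl_mult mult_in by blast
qed

lemma strictly_divides_at_cancel:
  "z \<noteq> 0 \<Longrightarrow> strictly_divides_at M (x * z) (y * z) \<Longrightarrow> strictly_divides_at M x y"
  unfolding strictly_divides_at_def by (metis mult.assoc mult_right_cancel)

lemma not_strictly_divides_at_and_divides_at:
  assumes "x \<noteq> 0" "strictly_divides_at M x y" "divides_at M y x"
  shows False
proof -
  obtain s m t r where "s \<in> Rset - M" "m \<in> M" "s * y = m * x" "t \<in> Rset - M" "r \<in> Rset" "t * x = r * y"
    using assms(2,3) unfolding strictly_divides_at_def divides_at_def by blast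
  moreover from this have "(s * t) * x = (r * m) * x"
    by (metis mult.assoc mult.left_commute)
  ultimately show False
    using assms(1) compl_mult mult_in by (metis Diff_iff mult_right_cancel)
qed

text \<open>In valuation terms the hypotheses read
  \<open>(2n+1) v(c) \<ge> v(P) + n v(e)\<close>, \<open>v(P) + (n+1) v(e) \<ge> 2(n+1) v(c)\<close> and \<open>v(P) > (n+1) v(c)\<close>;
  adding \<open>n\<close> times the second to the third contradicts \<open>n+1\<close> times the first.\<close>
lemma reduction_exponents_contradiction:
  assumes "c \<noteq> 0"
    and "divides_at M (P * e ^ n) (c ^ (n + Suc n))"
    and "divides_at M (c ^ (2 * Suc n)) (P * e ^ Suc n)"
    and "strictly_divides_at M (c ^ Suc n) P"
  shows False
proof -
  have "strictly_divides_at M ((c ^ (2 * Suc n)) ^ n * c ^ Suc n) ((P * e ^ Suc n) ^ n * P)"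
    by (rule divides_at_mult_strictly[OF divides_at_power[OF assms(3)] assms(4)])
  moreover have "(c ^ (2 * Suc n)) ^ n * c ^ Suc n = (c ^ (n + Suc n)) ^ Suc n"
  proof -
    have "(c ^ (2 * Suc n)) ^ n * c ^ Suc n = c ^ (2 * Suc n * n + Suc n)"
      by (simp only: power_mult power_add)
    also have "2 * Suc n * n + Suc n = (n + Suc n) * Suc n"
      by (simp add: algebra_simps)
    finally show ?thesis
      by (simp only: power_mult)
  qed
  moreover have "(P * e ^ Suc n) ^ n * P = (P * e ^ n) ^ Suc n"
  proof -
    have "(P * e ^ Suc n) ^ n * P = P ^ Suc n * (e ^ Suc n) ^ n"
      by (simp add: power_mult_distrib)
    also have "(e ^ Suc n) ^ n = (e ^ n) ^ Suc n"
      by (metis mult.commute power_mult)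
    also have "P ^ Suc n * (e ^ n) ^ Suc n = (P * e ^ n) ^ Suc n"
      by (simp only: power_mult_distrib)
    finally show ?thesis .
  qed
  ultimately show False
    using not_strictly_divides_at_and_divides_at divides_at_power[OF assms(2)] assms(1)
    by (metis power_not_zero)
qed

text \<open>\<open>P\<close> is a product \<open>j\<^sub>0 \<cdots> j\<^sub>k\<close> of elements of \<open>J\<close>, obtained by applying the reduction
  \<open>k+1\<close> times to \<open>c\<^sup>n\<^sup>+\<^sup>k\<^sup>+\<^sup>1\<close>; at \<open>k = n\<close> this feeds the lemma above.\<close>
lemma reduction_iterate:
  assumes reduction: "\<And>x. x \<in> ideal_pow Rset I (Suc n) \<Longrightarrow> \<exists>j\<in>J. \<exists>e\<in>I. divides_at M (j * e ^ n) x"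
    and c: "c \<in> I"
    and strict: "\<And>j. j \<in> J \<Longrightarrow> strictly_divides_at M c j"
    and square: "\<And>j e. j \<in> J \<Longrightarrow> e \<in> I \<Longrightarrow> divides_at M (c ^ 2) (j * e)"
  shows "\<exists>P e. e \<in> I \<and> divides_at M (P * e ^ n) (c ^ (n + Suc k))
    \<and> (\<forall>e'\<in>I. divides_at M (c ^ (2 * Suc k)) (P * e' ^ Suc k))
    \<and> strictly_divides_at M (c ^ Suc k) P"
proof (induction k)
  case 0
  obtain j e where "j \<in> J" "e \<in> I" "divides_at M (j * e ^ n) (c ^ Suc n)"
    using reduction[OF power_mem_ideal_pow[OF c]] by blast
  then show ?case
    using square strict by (intro exI[of _ j] exI[of _ e]) auto
next
  case (Suc k)
  then obtain P e where e: "e \<in> I" and P: "divides_at M (P * e ^ n) (c ^ (n + Suc k))"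
    and P_square: "\<forall>e'\<in>I. divides_at M (c ^ (2 * Suc k)) (P * e' ^ Suc k)"
    and P_strict: "strictly_divides_at M (c ^ Suc k) P" by blast
  have "c * e ^ n \<in> ideal_pow Rset I (Suc n)"
    by (simp add: ideal_prod_mem c power_mem_ideal_pow e)
  then obtain j e'' where j: "j \<in> J" and e'': "e'' \<in> I" "divides_at M (j * e'' ^ n) (c * e ^ n)"
    using reduction by blast
  have "divides_at M (P * j * e'' ^ n) (c * (P * e ^ n))"
    using divides_at_mult[OF divides_at_refl[of P] e''(2)] by (simp add: ac_simps)
  moreover have "divides_at M (c * (P * e ^ n)) (c ^ (n + Suc (Suc k)))"
    using divides_at_mult[OF divides_at_refl[of c] P] by simp
  moreover have "divides_at M (c ^ (2 * Suc (Suc k))) (P * j * e' ^ Suc (Suc k))" if "e' \<in> I" for e'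
    using divides_at_mult[OF P_square[rule_format, OF that] square[OF j that]]
    by (simp add: ac_simps power_add power2_eq_square)
  moreover have "strictly_divides_at M (c ^ Suc (Suc k)) (P * j)"
    using divides_at_mult_strictly[OF strictly_divides_at_imp_divides_at[OF strict[OF j]] P_strict]
    by (simp add: ac_simps)
  ultimately show ?case
    using e''(1) divides_at_trans by blast
qed

end

locale valuative_prime = prime_ideal +
  assumes comparable: "x \<in> Rset \<Longrightarrow> y \<in> Rset \<Longrightarrow> divides_at M x y \<or> divides_at M y x"
begin

lemma is_submodule_divided_at:
  assumes "X \<subseteq> Rset" "x\<^sub>0 \<in> X"
  shows "is_submodule Rset {y. \<exists>x\<in>X. divides_at M x y}"
  unfolding is_submodule_def
proof (intro conjI ballI)
  have "divides_at M x\<^sub>0 0"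
    unfolding divides_at_def using one_in_compl by force
  then show "0 \<in> {y. \<exists>x\<in>X. divides_at M x y}"
    using assms(2) by blast
next
  fix y1 y2 assume "y1 \<in> {y. \<exists>x\<in>X. divides_at M x y}" "y2 \<in> {y. \<exists>x\<in>X. divides_at M x y}"
  then obtain x1 x2 where x: "x1 \<in> X" "x2 \<in> X" and y: "divides_at M x1 y1" "divides_at M x2 y2"
    by blast
  consider "divides_at M x1 x2" | "divides_at M x2 x1"
    using comparable x assms(1) by blast
  then have "divides_at M x1 (y1 + y2) \<or> divides_at M x2 (y1 + y2)"
    using y divides_at_trans divides_at_add by metis
  then show "y1 + y2 \<in> {y. \<exists>x\<in>X. divides_at M x y}"
    using x by blast
next
  fix r y :: "'a fract" assume "r \<in> Rset" "y \<in> {y. \<exists>x\<in>X. divides_at M x y}"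
  then show "r * y \<in> {y. \<exists>x\<in>X. divides_at M x y}"
    using divides_at_scale by blast
qed

lemma ideal_prod_divides_at:
  assumes A: "is_ideal A" and B: "is_ideal B" and y: "y \<in> ideal_prod Rset A B"
  shows "\<exists>a\<in>A. \<exists>b\<in>B. divides_at M (a * b) y"
proof -
  let ?X = "{a * b |a b. a \<in> A \<and> b \<in> B}"
  have "?X \<subseteq> Rset" "0 * 0 \<in> ?X"
    using A B Rset_mult unfolding is_ideal_def by blast+
  then have "is_submodule Rset {y. \<exists>x\<in>?X. divides_at M x y}"
    by (rule is_submodule_divided_at)
  moreover have "?X \<subseteq> {y. \<exists>x\<in>?X. divides_at M x y}"
    using divides_at_refl by blast
  ultimately have "ideal_prod Rset A B \<subseteq> {y. \<exists>x\<in>?X. divides_at M x y}"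
    unfolding ideal_prod_def by (rule span_over_least)
  then show ?thesis
    using y by blast
qed

lemma ideal_pow_divides_at:
  assumes "is_ideal I" "w \<in> ideal_pow Rset I n"
  shows "\<exists>e\<in>I. divides_at M (e ^ n) w"
  using assms(2)
proof (induction n arbitrary: w)
  case 0
  then have "w \<in> Rset" "1 * w = w * 0 ^ 0" by simp_all
  then show ?case
    using assms(1) one_in_compl unfolding divides_at_def is_ideal_def by blast
next
  case (Suc n)
  obtain a b where a: "a \<in> I" and "b \<in> ideal_pow Rset I n" "divides_at M (a * b) w"
    using ideal_prod_divides_at[OF assms(1) is_ideal_ideal_pow[OF assms(1)]] Suc.prems by fastforce
  moreover obtain e where e: "e \<in> I" "divides_at M (e ^ n) b"
    using Suc.IH calculation(2) by blast
  ultimately have w: "divides_at M (a * e ^ n) w"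
    using divides_at_mult[OF divides_at_refl] divides_at_trans by blast
  have "a \<in> Rset" "e \<in> Rset"
    using assms(1) a e(1) unfolding is_ideal_def by auto
  then consider "divides_at M a e" | "divides_at M e a"
    using comparable by blast
  then show ?case
  proof cases
    case 1
    then have "divides_at M (a ^ Suc n) (a * e ^ n)"
      by (simp add: divides_at_mult divides_at_refl divides_at_power)
    then show ?thesis
      using a w divides_at_trans by blast
  next
    case 2
    then have "divides_at M (e ^ Suc n) (a * e ^ n)"
      by (simp add: divides_at_mult divides_at_refl)
    then show ?thesis
      using e(1) w divides_at_trans by blast
  qed
qed

lemma reduction_divides_at:
  assumes I: "is_ideal I" and J: "is_ideal J"
    and reduction: "ideal_pow Rset I (Suc n) \<subseteq> frac_at M (ideal_prod Rset J (ideal_pow Rset I n))"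
    and x: "x \<in> ideal_pow Rset I (Suc n)"
  shows "\<exists>j\<in>J. \<exists>e\<in>I. divides_at M (j * e ^ n) x"
proof -
  obtain s where s: "s \<in> Rset - M" "s * x \<in> ideal_prod Rset J (ideal_pow Rset I n)"
    using subsetD[OF reduction x] unfolding frac_at_iff by blast
  then obtain j w where j: "j \<in> J" and w: "w \<in> ideal_pow Rset I n" "divides_at M (j * w) (s * x)"
    using ideal_prod_divides_at[OF J is_ideal_ideal_pow[OF I]] by blast
  obtain e where e: "e \<in> I" "divides_at M (e ^ n) w"
    using ideal_pow_divides_at[OF I w(1)] by blast
  have "divides_at M (j * e ^ n) (s * x)"
    using divides_at_trans[OF divides_at_mult[OF divides_at_refl e(2)] w(2)] .
  then show ?thesis
    using j e(1) divides_at_cancel_compl[OF s(1)] by blast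
qed

lemma square_strictly_divides_at:
  assumes I: "is_ideal I" and J: "is_ideal J"
    and c: "c \<in> I" "c ^ 2 \<notin> frac_at M (ideal_prod Rset J I)"
    and j: "j \<in> J" and e: "e \<in> I"
  shows "strictly_divides_at M (c ^ 2) (j * e)"
proof -
  have je: "j * e \<in> ideal_prod Rset J I"
    by (rule ideal_prod_mem[OF j e])
  have "j \<in> Rset" "e \<in> Rset" "c \<in> Rset"
    using I J c(1) j e unfolding is_ideal_def by auto
  then have "j * e \<in> Rset" "c ^ 2 \<in> Rset"
    by (simp_all add: Rset_mult Rset_power)
  then consider "divides_at M (j * e) (c ^ 2)" | "divides_at M (c ^ 2) (j * e)"
    using comparable by blast
  then show ?thesis
  proof cases
    case 1
    then show ?thesis
      using c(2) frac_at_divides_at[OF is_submodule_ideal_prod subsetD[OF subset_frac_at je]]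
      by blast
  next
    case 2
    then obtain s r where sr: "s \<in> Rset - M" "r \<in> Rset" "s * (j * e) = r * c ^ 2"
      unfolding divides_at_def by blast
    moreover have "r \<in> M"
    proof (rule ccontr)
      assume "r \<notin> M"
      moreover have "r * c ^ 2 \<in> ideal_prod Rset J I"
        using sr submodule_scale[OF is_submodule_ideal_prod _ je] by (metis DiffD1)
      ultimately show False
        using c(2) \<open>r \<in> Rset\<close> unfolding frac_at_iff by blast
    qed
    ultimately show ?thesis
      unfolding strictly_divides_at_def by blast
  qed
qed

lemma square_in_frac_at_of_reduction:
  assumes I: "is_ideal I" and J: "is_ideal J"
    and reduction: "ideal_pow Rset I (Suc n) \<subseteq> frac_at M (ideal_prod Rset J (ideal_pow Rset I n))"
    and c: "c \<in> I"
  shows "c ^ 2 \<in> frac_at M (ideal_prod Rset J I)"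
proof (rule ccontr)
  assume not_in: "c ^ 2 \<notin> frac_at M (ideal_prod Rset J I)"
  then have "c \<noteq> 0"
    using subset_frac_at submodule_zero[OF is_submodule_ideal_prod] by fastforce
  have square: "strictly_divides_at M (c ^ 2) (j * e)" if "j \<in> J" "e \<in> I" for j e
    by (rule square_strictly_divides_at[OF I J c not_in that])
  have "strictly_divides_at M c j" if "j \<in> J" for j
    using strictly_divides_at_cancel[OF \<open>c \<noteq> 0\<close>] square[OF that c]
    by (simp add: power2_eq_square)
  then obtain P e where "e \<in> I" "divides_at M (P * e ^ n) (c ^ (n + Suc n))"
    "divides_at M (c ^ (2 * Suc n)) (P * e ^ Suc n)" "strictly_divides_at M (c ^ Suc n) P"
    using reduction_iterate[OF reduction_divides_at[OF I J reduction] c, of n]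
      square strictly_divides_at_imp_divides_at by blast
  then show False
    using reduction_exponents_contradiction[OF \<open>c \<noteq> 0\<close>] by blast
qed

lemma square_subset_frac_at_of_reduction:
  assumes I: "is_ideal I" and J: "is_ideal J"
    and reduction: "ideal_pow Rset I (Suc n) \<subseteq> frac_at M (ideal_prod Rset J (ideal_pow Rset I n))"
  shows "ideal_pow Rset I 2 \<subseteq> frac_at M (ideal_prod Rset J I)"
proof
  fix w assume "w \<in> ideal_pow Rset I 2"
  then obtain e where "e \<in> I" "divides_at M (e ^ 2) w"
    using ideal_pow_divides_at[OF I] by blast
  then show "w \<in> frac_at M (ideal_prod Rset J I)"
    using frac_at_divides_at[OF is_submodule_ideal_prod]
      square_in_frac_at_of_reduction[OF I J reduction] by blast
qed

end

lemma is_ideal_eq_Rset_iff: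
  assumes "is_ideal P"
  shows "P = Rset \<longleftrightarrow> 1 \<in> P"
proof
  assume "1 \<in> P"
  then have "r * 1 \<in> P" if "r \<in> Rset" for r
    using assms that unfolding is_ideal_def by blast
  then show "P = Rset"
    using assms unfolding is_ideal_def by auto
qed simp

lemma t_op_if_scales_unit_t_op:
  assumes N: "is_submodule Rset N" "1 \<in> t_op N" and A: "is_submodule Rset A"
    and scale: "\<And>w. w \<in> N \<Longrightarrow> x * w \<in> A"
  shows "x \<in> t_op A"
proof -
  obtain F where F: "finite F" "F \<subseteq> N" "1 \<in> v_op (R_span F)"
    using t_op_iff[OF N(1)] N(2) by blast
  then have "(*) x ` F \<subseteq> A"
    using scale by blast
  then show ?thesis
    using t_op_iff[OF A] F(1) v_op_R_span_scale[OF F(3)] by blast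
qed

lemma max_t_ideal_t_op_insert:
  assumes M: "max_t_ideal M" and a: "a \<in> Rset" "a \<notin> M"
  shows "t_op (R_span (insert a M)) = Rset"
proof (rule ccontr)
  let ?N = "R_span (insert a M)"
  assume "t_op ?N \<noteq> Rset"
  have N: "is_ideal ?N"
    using a M by (intro is_ideal_R_span) (auto simp: max_t_ideal_def is_ideal_def)
  have "insert a M \<subseteq> ?N"
    using span_over_superset[of Rset "insert a M"] by simp
  then have aM: "a \<in> t_op ?N" "M \<subseteq> t_op ?N"
    using t_op_extensive N unfolding is_ideal_iff_submodule by blast+
  have "is_ideal (t_op ?N)" "t_op (t_op ?N) = t_op ?N"
    using N is_ideal_t_op t_op_idem unfolding is_ideal_iff_submodule by blast+
  then have "t_op ?N = M"
    using M aM(2) \<open>t_op ?N \<noteq> Rset\<close> unfolding max_t_ideal_def by blast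
  then show False
    using aM(1) a(2) by blast
qed

lemma max_t_ideal_prime_ideal:
  assumes M: "max_t_ideal M"
  shows "prime_ideal M"
proof
  show M_ideal: "is_ideal M" and "1 \<notin> M"
    using M is_ideal_eq_Rset_iff unfolding max_t_ideal_def by auto
  have M_sub: "is_submodule Rset M"
    using M_ideal unfolding is_ideal_iff_submodule by blast
  fix a b assume a: "a \<in> Rset" and b: "b \<in> Rset" and ab: "a * b \<in> M"
  show "a \<in> M \<or> b \<in> M"
  proof (rule ccontr)
    assume not_in: "\<not> (a \<in> M \<or> b \<in> M)"
    have "insert a M \<subseteq> {w. b * w \<in> M}"
      using ab submodule_scale[OF M_sub b] by (auto simp: mult.commute)
    then have "R_span (insert a M) \<subseteq> {w. b * w \<in> M}"
      by (rule span_over_least[OF is_submodule_preimage_mult[OF M_sub]])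
    moreover have "1 \<in> t_op (R_span (insert a M))"
      using max_t_ideal_t_op_insert[OF M a] not_in by simp
    ultimately have "b \<in> t_op M"
      using t_op_if_scales_unit_t_op[OF is_submodule_R_span _ M_sub] by blast
    then show False
      using M not_in unfolding max_t_ideal_def by blast
  qed
qed

lemma is_submodule_Union_chain:
  assumes "C \<noteq> {}" "subset.chain {P. is_submodule Rset P} C"
  shows "is_submodule Rset (\<Union>C)"
  unfolding is_submodule_def
proof (intro conjI ballI)
  have sub: "\<And>P. P \<in> C \<Longrightarrow> is_submodule Rset P"
    and total: "\<And>P Q. P \<in> C \<Longrightarrow> Q \<in> C \<Longrightarrow> P \<subseteq> Q \<or> Q \<subseteq> P"
    using assms(2) unfolding subset_chain_def by blast+
  show "0 \<in> \<Union>C"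
    using assms(1) sub submodule_zero by blast
  show "x + y \<in> \<Union>C" if xy: "x \<in> \<Union>C" "y \<in> \<Union>C" for x y
  proof -
    obtain P Q where "P \<in> C" "Q \<in> C" "x \<in> P" "y \<in> Q"
      using xy by blast
    then show ?thesis
      using total[of P Q] sub submodule_add by blast
  qed
  show "s * x \<in> \<Union>C" if "s \<in> Rset" "x \<in> \<Union>C" for s x
    using that sub submodule_scale by blast
qed

lemma t_op_Union_chain:
  assumes "C \<noteq> {}" "subset.chain {P. is_submodule Rset P \<and> t_op P = P} C"
  shows "t_op (\<Union>C) = \<Union>C"
proof -
  have C: "subset.chain {P. is_submodule Rset P} C"
    using assms(2) unfolding subset_chain_def by blast
  have "t_op (\<Union>C) \<subseteq> \<Union>C"
  proof
    fix x assume "x \<in> t_op (\<Union>C)"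
    then obtain F where F: "finite F" "F \<subseteq> \<Union>C" "x \<in> v_op (R_span F)"
      using t_op_iff[OF is_submodule_Union_chain[OF assms(1) C]] by blast
    then obtain P where "P \<in> C" "F \<subseteq> P"
      using finite_subset_Union_chain[OF F(1,2) assms] by blast
    moreover from this have "is_submodule Rset P" "t_op P = P"
      using assms(2) unfolding subset_chain_def by auto
    ultimately show "x \<in> \<Union>C"
      using t_op_iff[of P x] F(1,3) by blast
  qed
  then show ?thesis
    using t_op_extensive[OF is_submodule_Union_chain[OF assms(1) C]] by blast
qed

lemma proper_t_ideal_Union_chain:
  assumes C: "C \<noteq> {}" "subset.chain {P. is_ideal P \<and> P \<noteq> Rset \<and> t_op P = P \<and> N \<subseteq> P} C"
  shows "\<Union>C \<in> {P. is_ideal P \<and> P \<noteq> Rset \<and> t_op P = P \<and> N \<subseteq> P}"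
proof -
  have members: "is_submodule Rset P \<and> P \<subseteq> Rset \<and> 1 \<notin> P \<and> t_op P = P \<and> N \<subseteq> P"
    if "P \<in> C" for P
    using C(2) that is_ideal_eq_Rset_iff[of P]
    unfolding subset_chain_def is_ideal_iff_submodule by blast
  have chain: "subset.chain {P. is_submodule Rset P \<and> t_op P = P} C"
    using C(2) members unfolding subset_chain_def by auto
  then have "subset.chain {P. is_submodule Rset P} C"
    unfolding subset_chain_def by blast
  then have "is_submodule Rset (\<Union>C)"
    by (rule is_submodule_Union_chain[OF C(1)])
  moreover have "t_op (\<Union>C) = \<Union>C"
    by (rule t_op_Union_chain[OF C(1) chain])
  moreover have "\<Union>C \<subseteq> Rset" "1 \<notin> \<Union>C" "N \<subseteq> \<Union>C"
    using members C(1) by blast+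
  ultimately show ?thesis
    unfolding is_ideal_iff_submodule by auto
qed

lemma ex_max_t_ideal_superset:
  assumes N: "is_ideal N" "t_op N = N" "N \<noteq> Rset"
  shows "\<exists>M. max_t_ideal M \<and> N \<subseteq> M"
proof -
  define \<T> where "\<T> = {P. is_ideal P \<and> P \<noteq> Rset \<and> t_op P = P \<and> N \<subseteq> P}"
  have "\<Union>C \<in> \<T>" if "C \<noteq> {}" "subset.chain \<T> C" for C
    using that unfolding \<T>_def by (rule proper_t_ideal_Union_chain)
  moreover have "N \<in> \<T>"
    using N unfolding \<T>_def by blast
  ultimately obtain M where M: "M \<in> \<T>" and maximal: "\<forall>P\<in>\<T>. M \<subseteq> P \<longrightarrow> P = M"
    using subset_Zorn_nonempty[of \<T>] by blast
  have "max_t_ideal M"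
    unfolding max_t_ideal_def
  proof (intro conjI allI impI)
    show "is_ideal M" "M \<noteq> Rset" "t_op M = M"
      using M unfolding \<T>_def by auto
    fix P assume "is_ideal P \<and> P \<noteq> Rset \<and> t_op P = P \<and> M \<subseteq> P"
    moreover from this have "P \<in> \<T>"
      using M unfolding \<T>_def by blast
    ultimately show "P = M"
      using maximal by blast
  qed
  then show ?thesis
    using M unfolding \<T>_def by blast
qed

text \<open>The conductor \<open>(A :\<^sub>R x)\<close> lies in no maximal t-ideal, so its t-closure contains \<open>1\<close>.\<close>
lemma t_op_if_local:
  assumes A: "is_ideal A"
    and local: "\<And>M. max_t_ideal M \<Longrightarrow> x \<in> frac_at M A"
  shows "x \<in> t_op A"
proof -
  define C where "C = Rset \<inter> {w. x * w \<in> A}"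
  have C: "is_ideal C"
    unfolding C_def is_ideal_iff_submodule
    using is_submodule_preimage_mult[of Rset A x] is_submodule_Rset A
    unfolding is_ideal_iff_submodule is_submodule_def by auto
  have "t_op C = Rset"
  proof (rule ccontr)
    assume "t_op C \<noteq> Rset"
    then obtain M where M: "max_t_ideal M" "t_op C \<subseteq> M"
      using ex_max_t_ideal_superset[OF is_ideal_t_op[OF C]] C t_op_idem
      unfolding is_ideal_iff_submodule by blast
    then obtain s where "s \<in> Rset - M" "s * x \<in> A"
      using local prime_ideal.frac_at_iff[OF max_t_ideal_prime_ideal] by blast
    then have "s \<in> t_op C" "s \<notin> M"
      using t_op_extensive C unfolding C_def is_ideal_iff_submodule by (auto simp: mult.commute)
    then show False
      using M(2) by blast
  qed
  then have one: "1 \<in> t_op C" by simp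
  have C_sub: "is_submodule Rset C" and A_sub: "is_submodule Rset A"
    using C A unfolding is_ideal_iff_submodule by blast+
  have "x * w \<in> A" if "w \<in> C" for w
    using that unfolding C_def by blast
  then show "x \<in> t_op A"
    by (rule t_op_if_scales_unit_t_op[OF C_sub one A_sub])
qed

lemma R_span_empty: "R_span {} = {0}"
  unfolding span_over_def by auto

lemma v_op_zero_if_max_t_ideal:
  fixes M :: "'a::idom fract set"
  assumes M: "max_t_ideal M"
  shows "v_op {0 :: 'a fract} = {0}"
proof -
  interpret prime_ideal M
    by (rule max_t_ideal_prime_ideal[OF M])
  have "{0} \<subseteq> M" "fin_gen {0}"
    using zero_in fin_gen_R_span[of "{}"] by (auto simp: R_span_empty)
  then have "v_op {0} \<subseteq> t_op M"
    unfolding t_op_def by blast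
  then have vM: "v_op {0} \<subseteq> M"
    using M unfolding max_t_ideal_def by blast
  have inverse_Rset: "inverse x \<in> Rset" if "x \<in> v_op {0}" "x \<noteq> 0" for x :: "'a fract"
  proof -
    have "inverse (x * x) \<in> ideal_inv {0}"
      by (simp add: ideal_inv_def)
    then have "x * inverse (x * x) \<in> Rset"
      using that(1) unfolding v_op_def ideal_inv_def[of "ideal_inv {0}"] by blast
    moreover have "x * inverse (x * x) = inverse x"
      using that(2) by (simp add: mult.assoc[symmetric])
    ultimately show ?thesis by metis
  qed
  have "x = 0" if "x \<in> v_op {0}" for x :: "'a fract"
  proof (rule ccontr)
    assume "x \<noteq> 0"
    then have "inverse x \<in> Rset" "x \<in> M"
      using that vM inverse_Rset by auto
    then have "inverse x * x \<in> M"
      by (rule mult_in)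
    then show False
      using \<open>x \<noteq> 0\<close> one_notin by simp
  qed
  then show ?thesis
    using v_op_extensive[of "{0}"] by auto
qed

lemma PvMD_locally_invertible:
  fixes M G :: "'a::idom fract set"
  assumes P: "PvMD TYPE('a)" and M: "max_t_ideal M"
    and G: "is_ideal G" "fin_gen G" "G \<noteq> {0}"
  shows "\<exists>f\<in>G. \<exists>g\<in>ideal_inv G. f * g \<notin> M"
proof (rule ccontr)
  assume "\<not> ?thesis"
  then have "{f * g |f g. f \<in> G \<and> g \<in> ideal_inv G} \<subseteq> M"
    by blast
  moreover have "is_submodule Rset M"
    using M unfolding max_t_ideal_def is_ideal_iff_submodule by blast
  ultimately have "ideal_prod Rset G (ideal_inv G) \<subseteq> M"
    unfolding ideal_prod_def by (rule span_over_least[rotated])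
  then have "t_op (ideal_prod Rset G (ideal_inv G)) \<subseteq> t_op M"
    by (rule t_op_mono)
  also have "t_op M = M"
    using M unfolding max_t_ideal_def by blast
  also have "t_op (ideal_prod Rset G (ideal_inv G)) = Rset"
    using P G unfolding PvMD_def by blast
  finally show False
    using prime_ideal.one_notin[OF max_t_ideal_prime_ideal[OF M]] Rset_one by blast
qed

lemma t_op_subset_frac_at:
  fixes M A :: "'a::idom fract set"
  assumes P: "PvMD TYPE('a)" and M: "max_t_ideal M" and A: "is_ideal A"
  shows "t_op A \<subseteq> frac_at M A"
proof
  interpret prime_ideal M
    by (rule max_t_ideal_prime_ideal[OF M])
  fix x assume "x \<in> t_op A"
  then obtain F where F: "finite F" "F \<subseteq> A" and x: "x \<in> v_op (R_span F)"
    using t_op_iff[of A x] A unfolding is_ideal_iff_submodule by blast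
  have A_sub: "is_submodule Rset A" "A \<subseteq> Rset"
    using A unfolding is_ideal_iff_submodule by blast+
  have GA: "R_span F \<subseteq> A"
    by (rule span_over_least[OF A_sub(1) F(2)])
  show "x \<in> frac_at M A"
  proof (cases "R_span F = {0}")
    case True
    then have "x \<in> v_op {0}"
      using x by simp
    then have "x = 0"
      using v_op_zero_if_max_t_ideal[OF M] by blast
    then show ?thesis
      using submodule_zero[OF A_sub(1)] subset_frac_at by blast
  next
    case False
    have "is_ideal (R_span F)"
      using F(2) A_sub(2) by (intro is_ideal_R_span) blast
    then obtain f g where f: "f \<in> R_span F" and g: "g \<in> ideal_inv (R_span F)" and "f * g \<notin> M"
      using PvMD_locally_invertible[OF P M _ fin_gen_R_span[OF F(1)] False] by blast
    moreover have "f * g \<in> Rset" "x * g \<in> Rset"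
      using f g x unfolding v_op_def ideal_inv_def by (auto simp: mult.commute)
    moreover have "(f * g) * x = (x * g) * f"
      by (simp add: ac_simps)
    ultimately show ?thesis
      unfolding frac_at_iff using GA submodule_scale[OF A_sub(1)] by (metis Diff_iff subsetD)
  qed
qed

lemma PvMD_max_t_ideal_valuative:
  fixes M :: "'a::idom fract set"
  assumes P: "PvMD TYPE('a)" and M: "max_t_ideal M"
  shows "valuative_prime M"
proof -
  interpret prime_ideal M
    by (rule max_t_ideal_prime_ideal[OF M])
  show ?thesis
  proof
    fix x y :: "'a fract" assume xy: "x \<in> Rset" "y \<in> Rset"
    show "divides_at M x y \<or> divides_at M y x"
    proof (cases "x = 0 \<and> y = 0")
      case True
      then show ?thesis by (simp add: divides_at_refl)
    next
      case False
      define G where "G = R_span {x, y}"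
      have xyG: "x \<in> G" "y \<in> G"
        unfolding G_def using span_over_superset[of Rset "{x, y}"] by auto
      have "is_ideal G" "fin_gen G" "G \<noteq> {0}"
        unfolding G_def using xy xyG False by (auto simp: is_ideal_R_span fin_gen_R_span G_def)
      then obtain f g where f: "f \<in> G" and g: "g \<in> ideal_inv G" and "f * g \<notin> M"
        using PvMD_locally_invertible[OF P M] by blast
      have "g * x \<notin> M \<or> g * y \<notin> M"
      proof (rule ccontr)
        assume "\<not> ?thesis"
        then have "G \<subseteq> {w. g * w \<in> M}"
          unfolding G_def using ideal unfolding is_ideal_iff_submodule
          by (intro span_over_least is_submodule_preimage_mult) auto
        then show False
          using f \<open>f * g \<notin> M\<close> by (auto simp: mult.commute)
      qed
      moreover have "g * x \<in> Rset" "g * y \<in> Rset"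
        using g xyG unfolding ideal_inv_def by auto
      moreover have "(g * x) * y = (g * y) * x"
        by (simp add: ac_simps)
      ultimately show ?thesis
        unfolding divides_at_def by (metis Diff_iff)
    qed
  qed
qed

lemma t_op_eq_iff_local:
  fixes A B :: "'a::idom fract set"
  assumes P: "PvMD TYPE('a)" and A: "is_ideal A" and B: "is_ideal B" and AB: "A \<subseteq> B"
  shows "t_op A = t_op B \<longleftrightarrow> (\<forall>M. max_t_ideal M \<longrightarrow> B \<subseteq> frac_at M A)"
  using t_op_eq_t_op_iff[OF _ _ AB] A B t_op_subset_frac_at[OF P _ A] t_op_if_local[OF A]
  unfolding is_ideal_iff_submodule by blast

lemma t_reduction_imp_local:
  fixes M I J :: "'a::idom fract set"
  assumes P: "PvMD TYPE('a)" and M: "max_t_ideal M" and I: "is_ideal I" and J: "is_ideal J"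
    and reduction: "t_op (ideal_prod Rset J (ideal_pow Rset I n)) = t_op (ideal_pow Rset I (n + 1))"
  shows "ideal_pow Rset I 2 \<subseteq> frac_at M (ideal_prod Rset J I)"
proof -
  interpret valuative_prime M
    by (rule PvMD_max_t_ideal_valuative[OF P M])
  have "ideal_pow Rset I (n + 1) \<subseteq> t_op (ideal_pow Rset I (n + 1))"
    by (rule t_op_extensive[OF is_submodule_ideal_pow])
  also have "\<dots> = t_op (ideal_prod Rset J (ideal_pow Rset I n))"
    by (rule reduction[symmetric])
  also have "\<dots> \<subseteq> frac_at M (ideal_prod Rset J (ideal_pow Rset I n))"
    by (rule t_op_subset_frac_at[OF P M is_ideal_ideal_prod[OF J is_ideal_ideal_pow[OF I]]])
  finally show ?thesis
    using square_subset_frac_at_of_reduction[OF I J] by simp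
qed

theorem lemma2p2:
  fixes I J :: "'a::idom fract set"
  assumes "PvMD TYPE('a)"
    and "is_ideal I" and "is_ideal J" and "J \<subseteq> I" and "I \<noteq> {0}" and "J \<noteq> {0}"
  shows "((\<exists>n\<ge>1. t_op (ideal_prod Rset J (ideal_pow Rset I n)) = t_op (ideal_pow Rset I (n + 1)))
           \<longleftrightarrow> (\<forall>M. max_t_ideal M \<longrightarrow>
                 ideal_prod (loc M) (ext_loc M J) (ext_loc M I) = ideal_pow (loc M) (ext_loc M I) 2))
       \<and> ((\<forall>M. max_t_ideal M \<longrightarrow>
                 ideal_prod (loc M) (ext_loc M J) (ext_loc M I) = ideal_pow (loc M) (ext_loc M I) 2)
           \<longleftrightarrow> t_op (ideal_prod Rset J I) = t_op (ideal_pow Rset I 2))"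
proof -
  note P = assms(1) and I = assms(2) and J = assms(3)
  have I_sub: "is_submodule Rset I" and J_sub: "is_submodule Rset J"
    using I J unfolding is_ideal_iff_submodule by blast+
  have local_iff: "ideal_prod (loc M) (ext_loc M J) (ext_loc M I) = ideal_pow (loc M) (ext_loc M I) 2
      \<longleftrightarrow> ideal_pow Rset I 2 \<subseteq> frac_at M (ideal_prod Rset J I)" if "max_t_ideal M" for M
    by (rule prime_ideal.ext_loc_reduction_iff[OF max_t_ideal_prime_ideal[OF that] I_sub J_sub assms(4)])
  have t_iff: "t_op (ideal_prod Rset J I) = t_op (ideal_pow Rset I 2)
      \<longleftrightarrow> (\<forall>M. max_t_ideal M \<longrightarrow> ideal_pow Rset I 2 \<subseteq> frac_at M (ideal_prod Rset J I))"
    by (rule t_op_eq_iff_local[OF P is_ideal_ideal_prod[OF J I] is_ideal_ideal_pow[OF I]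
          ideal_prod_subset_ideal_pow_two[OF I_sub assms(4)]])
  have "t_op (ideal_prod Rset J (ideal_pow Rset I 1)) = t_op (ideal_pow Rset I (1 + 1))"
    if "t_op (ideal_prod Rset J I) = t_op (ideal_pow Rset I 2)"
    using that by (simp only: ideal_pow_one[OF I_sub] one_add_one)
  then show ?thesis
    using local_iff t_iff t_reduction_imp_local[OF P _ I J] by (metis order_refl)
qed

end
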